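(* Let $\mathcal X$, $\mathcal Y$, $\mathcal Z$ be finite sets ($\mathcal Y$ the set of collections of intermediate outputs, $\mathcal Z$ the set of final outputs), let $\mathcal S=\mathcal Y\times\mathcal Z$, and write $s=(y,z)\in\mathcal S$. Let $r^*:\mathcal X\times\mathcal Z\to\mathbb R$, $\beta>0$, and let $\mathbb P(z\succ z'\mid x)=\frac{e^{r^*(x,z)}}{e^{r^*(x,z)}+e^{r^*(x,z')}}$ be the Bradley–Terry preference oracle on final outputs. Define the system preference oracle $\mathbb P_{\mathrm{sys}}(s^w\succ s^l\mid x):=\mathbb P(z^w\succ z^l\mid x)$ for $s^w=(y^w,z^w)$, $s^l=(y^l,z^l)$. Let the compound system be a family $\{p_\theta(\cdot\mid x):\theta\in\Theta\}$ of joint conditional distributions on $\mathcal S$, and assume this family contains every conditional distribution on $\mathcal S$ that is strictly positive. Let the reference $p_{\bar\theta}(\cdot\mid x)$ be uniform on $\mathcal S$ for every $x$. Let $\mathcal D$ be the preference distribution obtained by drawing $(x,s,s')$ from a distribution $\mathcal D'$ on $\mathcal X\times\mathcal S\times\mathcal S$ that gives positive probability to every triple (in particular every $s\in\mathcal Y\times\mathcal Z$ is sampled with positive probability), and setting $(s^w,s^l)=(s,s')$ with probability $\mathbb P_{\mathrm{sys}}(s\succ s'\mid x)$ and $(s^w,s^l)=(s',s)$ otherwise. Suppose $\theta^*_{\mathrm{sys}}\in\Theta$ minimizes the SysDPO loss $$L_{\mathrm{Direct}}(\theta)=-\mathbb E_{(x,s^w,s^l)\sim\mathcal D}\Big[\log\sigma\Big(\beta\log\tfrac{p_\theta(s^w\mid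 x)}{p_{\bar\theta}(s^w\mid x)}-\beta\log\tfrac{p_\theta(s^l\mid x)}{p_{\bar\theta}(s^l\mid x)}\Big)\Big],$$ with $\sigma$ the sigmoid. Then the marginal model on final outputs, $p_{\theta^*_{\mathrm{sys}}}(z\mid x)=\sum_{y\in\mathcal Y}p_{\theta^*_{\mathrm{sys}}}(y,z\mid x)$, is $\beta$-perfectly aligned with $\mathbb P$, i.e. for all $x\in\mathcal X$ and $z^w,z^l\in\mathcal Z$, $$\mathbb P(z^w\succ z^l\mid x)=\frac{p_{\theta^*_{\mathrm{sys}}}(z^w\mid x)^\beta}{p_{\theta^*_{\mathrm{sys}}}(z^w\mid x)^\beta+p_{\theta^*_{\mathrm{sys}}}(z^l\mid x)^\beta}.$$
   Context: A generative model $\theta^*$ with conditional distribution $p_{\theta^*}(\cdot\mid x)$ on $\mathcal Z$ is called $\beta$-perfectly aligned (for $\beta>0$) with a preference oracle $\mathbb P(\cdot\succ\cdot\mid x)$ if for all $x\in\mathcal X$ and $z^w,z^l\in\mathcal Z$, $\frac{\mathbb P(z^w\succ z^l\mid x)}{\mathbb P(z^l\succ z^w\mid x)}=\Big(\frac{p_{\theta^*}(z^w\mid x)}{p_{\theta^*}(z^l\mid x)}\Big)^\beta$, equivalently $\mathbb P(z^w\succ z^l\mid x)=\frac{p_{\theta^*}(z^w\mid x)^\beta}{p_{\theta^*}(z^w\mid x)^\beta+p_{\theta^*}(z^l\mid x)^\beta}$. *)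

theory Defs
  imports Complex_Main "HOL-Library.Extended_Real"
begin

definition sigmoid :: "real \<Rightarrow> real" where
  "sigmoid t = 1 / (1 + exp (- t))"

definition BT :: "('x \<Rightarrow> 'z \<Rightarrow> real) \<Rightarrow> 'x \<Rightarrow> 'z \<Rightarrow> 'z \<Rightarrow> real" where
  "BT r x z z' = exp (r x z) / (exp (r x z) + exp (r x z'))"

definition Psys :: "('x \<Rightarrow> 'z \<Rightarrow> real) \<Rightarrow> 'x \<Rightarrow> 'y \<times> 'z \<Rightarrow> 'y \<times> 'z \<Rightarrow> real" where
  "Psys r x s s' = BT r x (snd s) (snd s')"

definition cond_dist :: "('x \<Rightarrow> 's::finite \<Rightarrow> real) \<Rightarrow> bool" where
  "cond_dist q \<longleftrightarrow> (\<forall>x s. 0 \<le> q x s) \<and> (\<forall>x. (\<Sum>s\<in>UNIV. q x s) = 1)"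

definition uniform_ref :: "'x \<Rightarrow> ('y::finite \<times> 'z::finite) \<Rightarrow> real" where
  "uniform_ref x s = 1 / real (card (UNIV :: ('y \<times> 'z) set))"

definition dpo_term :: "real \<Rightarrow> ('x \<Rightarrow> 'y::finite \<times> 'z::finite \<Rightarrow> real) \<Rightarrow> 'x
     \<Rightarrow> 'y \<times> 'z \<Rightarrow> 'y \<times> 'z \<Rightarrow> real" where
  "dpo_term \<beta> q x sw sl =
     - ln (sigmoid (\<beta> * ln (q x sw / uniform_ref x sw) - \<beta> * ln (q x sl / uniform_ref x sl)))"

text \<open>Value in ereal: if the model assigns probability 0 to some
  s, the loss is +infinity (the true value of -log sigma(-infinity) under positive sampling).\<close>
definition L_direct :: "real \<Rightarrow> ('x::finite \<Rightarrow> 'z::finite \<Rightarrow> real)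
     \<Rightarrow> ('x \<Rightarrow> 'y::finite \<times> 'z \<Rightarrow> 'y \<times> 'z \<Rightarrow> real)
     \<Rightarrow> ('x \<Rightarrow> 'y \<times> 'z \<Rightarrow> real) \<Rightarrow> ereal" where
  "L_direct \<beta> r d q =
     (if (\<forall>x s. 0 < q x s) then
        ereal (\<Sum>x\<in>UNIV. \<Sum>s\<in>UNIV. \<Sum>s'\<in>UNIV. d x s s' *
           (Psys r x s s' * dpo_term \<beta> q x s s' + (1 - Psys r x s s') * dpo_term \<beta> q x s' s))
      else \<infinity>)"

definition marginal :: "('x \<Rightarrow> 'y::finite \<times> 'z \<Rightarrow> real) \<Rightarrow> 'x \<Rightarrow> 'z \<Rightarrow> real" where
  "marginal q x z = (\<Sum>y\<in>UNIV. q x (y, z))"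

end

theory Submission
  imports Defs
begin

text \<open>For strictly positive models the SysDPO loss is a d-weighted sum of binary cross entropies
  between the oracle probability Psys and sigmoid of the beta-scaled log-ratio of the model
  (the uniform reference cancels). By Gibbs' inequality each cross entropy is minimised exactly
  when the two probabilities agree, and this is attained by the Gibbs model proportional to
  exp (r/beta), which the rich family contains. Since all weights are positive, a minimiser must
  match Psys on every pair, which pins down its log-ratios: it is itself proportional to
  exp (r/beta). Summing over the intermediate outputs only multiplies by card Y, so the beta-th
  powers of the marginals reproduce the Bradley--Terry probabilities.\<close>

definition binary_cross_entropy :: "real \<Rightarrow> real \<Rightarrow> real" where
  "binary_cross_entropy P t = P * (- ln t) + (1 - P) * (- ln (1 - t))"

lemma binary_cross_entropy_less:
  assumes "0 < P" "P < 1" "0 < t" "t < 1" "t \<noteq> P"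
  shows "binary_cross_entropy P P < binary_cross_entropy P t"
proof -
  have "ln t - ln P < (t - P) / P"
    using ln_diff_less assms by auto
  then have strict: "P * (ln t - ln P) < t - P"
    using mult_strict_left_mono[of _ _ P] assms by (simp add: field_simps)
  have "ln (1 - t) - ln (1 - P) \<le> ((1 - t) - (1 - P)) / (1 - P)"
    using ln_diff_le[of "1 - t" "1 - P"] assms by linarith
  then have "(1 - P) * (ln (1 - t) - ln (1 - P)) \<le> P - t"
    using mult_left_mono[of _ _ "1 - P"] assms by (simp add: field_simps)
  with strict show ?thesis
    unfolding binary_cross_entropy_def by (simp add: algebra_simps)
qed

lemma binary_cross_entropy_ge:
  assumes "0 < P" "P < 1" "0 < t" "t < 1"
  shows "binary_cross_entropy P P \<le> binary_cross_entropy P t"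
  using binary_cross_entropy_less[OF assms] by (cases "t = P") auto

lemma sigmoid_pos: "0 < sigmoid u"
  unfolding sigmoid_def by (simp add: add_pos_pos)

lemma sigmoid_less_1: "sigmoid u < 1"
  unfolding sigmoid_def by (simp add: divide_less_eq_1 add_pos_pos)

lemma sigmoid_minus: "sigmoid (- u) = 1 - sigmoid u"
proof -
  have "0 < 1 + exp u"
    by (simp add: add_pos_pos)
  then show ?thesis
    unfolding sigmoid_def by (simp add: exp_minus field_simps)
qed

lemma sigmoid_inject: "sigmoid a = sigmoid b \<longleftrightarrow> a = b"
  unfolding sigmoid_def by (auto simp: add_pos_pos)

lemma sigmoid_diff_eq_BT: "sigmoid (r x z - r x z') = BT r x z z'"
  unfolding sigmoid_def BT_def by (simp add: field_simps exp_diff exp_minus)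

lemma BT_pos: "0 < BT r x z z'"
  unfolding BT_def by (simp add: add_pos_pos)

lemma BT_less_1: "BT r x z z' < 1"
  unfolding BT_def by (simp add: add_pos_pos)

lemma dpo_term_pos_model:
  fixes q :: "'x \<Rightarrow> 'y::finite \<times> 'z::finite \<Rightarrow> real"
  assumes "0 < q x s" "0 < q x s'"
  shows "dpo_term \<beta> q x s s' = - ln (sigmoid (\<beta> * (ln (q x s) - ln (q x s'))))"
proof -
  have ref_pos: "0 < uniform_ref x s" and ref_eq: "uniform_ref x s' = uniform_ref x s"
    unfolding uniform_ref_def by (simp_all add: card_gt_0_iff)
  have "\<beta> * ln (q x s / uniform_ref x s) - \<beta> * ln (q x s' / uniform_ref x s')
      = \<beta> * (ln (q x s) - ln (q x s'))"
    using assms ref_pos unfolding ref_eq by (simp add: ln_div algebra_simps)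
  then show ?thesis
    unfolding dpo_term_def by simp
qed

lemma dpo_pair_pos_model:
  fixes q :: "'x \<Rightarrow> 'y::finite \<times> 'z::finite \<Rightarrow> real"
  assumes "0 < q x s" "0 < q x s'"
  shows "P * dpo_term \<beta> q x s s' + (1 - P) * dpo_term \<beta> q x s' s
    = binary_cross_entropy P (sigmoid (\<beta> * (ln (q x s) - ln (q x s'))))"
proof -
  have "\<beta> * (ln (q x s') - ln (q x s)) = - (\<beta> * (ln (q x s) - ln (q x s')))"
    by (simp add: algebra_simps)
  then show ?thesis
    unfolding binary_cross_entropy_def dpo_term_pos_model[of q x s s', OF assms]
      dpo_term_pos_model[of q x s' s, OF assms(2,1)] by (simp add: sigmoid_minus)
qed

lemma L_direct_pos_model:
  fixes q :: "'x::finite \<Rightarrow> 'y::finite \<times> 'z::finite \<Rightarrow> real"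
  assumes "\<forall>x s. 0 < q x s"
  shows "L_direct \<beta> r d q = ereal (\<Sum>x\<in>UNIV. \<Sum>s\<in>UNIV. \<Sum>s'\<in>UNIV. d x s s' *
           binary_cross_entropy (Psys r x s s') (sigmoid (\<beta> * (ln (q x s) - ln (q x s')))))"
proof -
  have "Psys r x s s' * dpo_term \<beta> q x s s' + (1 - Psys r x s s') * dpo_term \<beta> q x s' s
      = binary_cross_entropy (Psys r x s s') (sigmoid (\<beta> * (ln (q x s) - ln (q x s'))))"
    for x s s'
    using assms by (simp only: dpo_pair_pos_model)
  then show ?thesis
    unfolding L_direct_def if_P[OF assms] by simp
qed

lemma triple_sum_strict_mono:
  fixes f g :: "'a::finite \<Rightarrow> 'b::finite \<Rightarrow> 'c::finite \<Rightarrow> 'r::ordered_cancel_comm_monoid_add"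
  assumes "\<forall>x s s'. f x s s' \<le> g x s s'" "f x0 s0 s0' < g x0 s0 s0'"
  shows "(\<Sum>x\<in>UNIV. \<Sum>s\<in>UNIV. \<Sum>s'\<in>UNIV. f x s s') < (\<Sum>x\<in>UNIV. \<Sum>s\<in>UNIV. \<Sum>s'\<in>UNIV. g x s s')"
proof -
  have inner: "(\<Sum>s'\<in>UNIV. f x0 s0 s') < (\<Sum>s'\<in>UNIV. g x0 s0 s')"
    using assms by (intro sum_strict_mono_ex1) auto
  have "(\<Sum>s\<in>UNIV. \<Sum>s'\<in>UNIV. f x0 s s') < (\<Sum>s\<in>UNIV. \<Sum>s'\<in>UNIV. g x0 s s')"
    using assms inner by (intro sum_strict_mono_ex1) (auto intro: sum_mono)
  then show ?thesis
    using assms by (intro sum_strict_mono_ex1) (auto intro!: sum_mono)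
qed

definition oracle_entropy :: "('x::finite \<Rightarrow> 'z::finite \<Rightarrow> real)
     \<Rightarrow> ('x \<Rightarrow> 'y::finite \<times> 'z \<Rightarrow> 'y \<times> 'z \<Rightarrow> real) \<Rightarrow> real" where
  "oracle_entropy r d = (\<Sum>x\<in>UNIV. \<Sum>s\<in>UNIV. \<Sum>s'\<in>UNIV. d x s s' *
     binary_cross_entropy (Psys r x s s') (Psys r x s s'))"

lemma sigmoid_log_ratio_eq_Psys_if_L_direct_le:
  fixes q :: "'x::finite \<Rightarrow> 'y::finite \<times> 'z::finite \<Rightarrow> real"
  assumes d_pos: "\<forall>x s s'. 0 < d x s s'"
    and q_pos: "\<forall>x s. 0 < q x s"
    and le: "L_direct \<beta> r d q \<le> ereal (oracle_entropy r d)"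
  shows "sigmoid (\<beta> * (ln (q x s) - ln (q x s'))) = Psys r x s s'"
proof (rule ccontr)
  define U where "U x s s' = sigmoid (\<beta> * (ln (q x s) - ln (q x s')))" for x s s'
  assume "\<not> ?thesis"
  then have ne: "U x s s' \<noteq> Psys r x s s'"
    unfolding U_def .
  have bounds: "0 < Psys r x s s'" "Psys r x s s' < 1" "0 < U x s s'" "U x s s' < 1" for x s s'
    unfolding Psys_def U_def by (simp_all add: BT_pos BT_less_1 sigmoid_pos sigmoid_less_1)
  have "oracle_entropy r d < (\<Sum>x\<in>UNIV. \<Sum>s\<in>UNIV. \<Sum>s'\<in>UNIV. d x s s' *
           binary_cross_entropy (Psys r x s s') (U x s s'))"
    unfolding oracle_entropy_def
  proof (rule triple_sum_strict_mono)
    show "\<forall>x s s'. d x s s' * binary_cross_entropy (Psys r x s s') (Psys r x s s')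
        \<le> d x s s' * binary_cross_entropy (Psys r x s s') (U x s s')"
      using d_pos bounds by (auto intro: mult_left_mono binary_cross_entropy_ge less_imp_le)
    show "d x s s' * binary_cross_entropy (Psys r x s s') (Psys r x s s')
        < d x s s' * binary_cross_entropy (Psys r x s s') (U x s s')"
      using binary_cross_entropy_less[OF bounds(1) bounds(2) bounds(3) bounds(4) ne]
      by (rule mult_strict_left_mono) (use d_pos in blast)
  qed
  with le show False
    unfolding L_direct_pos_model[OF q_pos] U_def by simp
qed

lemma log_ratio_eq_if_L_direct_le:
  fixes q :: "'x::finite \<Rightarrow> 'y::finite \<times> 'z::finite \<Rightarrow> real"
  assumes "\<forall>x s s'. 0 < d x s s'" "\<forall>x s. 0 < q x s"
    and "L_direct \<beta> r d q \<le> ereal (oracle_entropy r d)"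
  shows "\<beta> * (ln (q x s) - ln (q x s')) = r x (snd s) - r x (snd s')"
proof -
  have "sigmoid (\<beta> * (ln (q x s) - ln (q x s'))) = sigmoid (r x (snd s) - r x (snd s'))"
    using sigmoid_log_ratio_eq_Psys_if_L_direct_le[OF assms]
    unfolding Psys_def sigmoid_diff_eq_BT .
  then show ?thesis
    unfolding sigmoid_inject .
qed

lemma pos_model_if_L_direct_finite:
  assumes "L_direct \<beta> r d q \<le> ereal c"
  shows "\<forall>x s. 0 < q x s"
proof (rule ccontr)
  assume "\<not> ?thesis"
  then have "L_direct \<beta> r d q = \<infinity>"
    unfolding L_direct_def by auto
  with assms show False
    by simp
qed

definition gibbs_model :: "real \<Rightarrow> ('x \<Rightarrow> 'z \<Rightarrow> real) \<Rightarrow> 'x \<Rightarrow> 'y::finite \<times> 'z::finite \<Rightarrow> real" where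
  "gibbs_model \<beta> r x s = exp (r x (snd s) / \<beta>) / (\<Sum>s'\<in>(UNIV :: ('y \<times> 'z) set). exp (r x (snd s') / \<beta>))"

lemma gibbs_partition_pos:
  fixes r :: "'x \<Rightarrow> 'z::finite \<Rightarrow> real"
  shows "0 < (\<Sum>s\<in>(UNIV :: ('y::finite \<times> 'z::finite) set). exp (r x (snd s) / \<beta>))"
  by (intro sum_pos) auto

lemma gibbs_model_pos: "0 < gibbs_model \<beta> r x s"
  unfolding gibbs_model_def by (intro divide_pos_pos gibbs_partition_pos exp_gt_zero)

lemma cond_dist_gibbs_model:
  "cond_dist (gibbs_model \<beta> r :: 'x \<Rightarrow> 'y::finite \<times> 'z::finite \<Rightarrow> real)"
  unfolding cond_dist_def
proof (intro conjI allI)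
  show "0 \<le> gibbs_model \<beta> r x (s :: 'y \<times> 'z)" for x s
    by (rule less_imp_le[OF gibbs_model_pos])
  show "(\<Sum>s\<in>UNIV. gibbs_model \<beta> r x (s :: 'y \<times> 'z)) = 1" for x
    unfolding gibbs_model_def sum_divide_distrib[symmetric]
    by (simp add: gibbs_partition_pos[THEN less_imp_neq, THEN not_sym])
qed

lemma gibbs_model_log_ratio:
  fixes s s' :: "'y::finite \<times> 'z::finite"
  assumes "\<beta> \<noteq> 0"
  shows "\<beta> * (ln (gibbs_model \<beta> r x s) - ln (gibbs_model \<beta> r x s')) = r x (snd s) - r x (snd s')"
  using assms unfolding gibbs_model_def
  by (simp add: gibbs_partition_pos[THEN less_imp_neq, THEN not_sym] ln_div algebra_simps)

lemma L_direct_gibbs_model: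
  fixes r :: "'x::finite \<Rightarrow> 'z::finite \<Rightarrow> real"
  assumes "\<beta> \<noteq> 0"
  shows "L_direct \<beta> r d (gibbs_model \<beta> r :: 'x \<Rightarrow> 'y::finite \<times> 'z \<Rightarrow> real)
    = ereal (oracle_entropy r d)"
  using assms unfolding oracle_entropy_def
  by (simp add: L_direct_pos_model gibbs_model_pos gibbs_model_log_ratio sigmoid_diff_eq_BT Psys_def)

lemma BT_eq_marginal_powr_if_log_ratio:
  fixes q :: "'x \<Rightarrow> 'y::finite \<times> 'z::finite \<Rightarrow> real"
  assumes "\<beta> \<noteq> 0"
    and q_pos: "\<forall>s. 0 < q x s"
    and log_ratio: "\<forall>s s'. \<beta> * (ln (q x s) - ln (q x s')) = r x (snd s) - r x (snd s')"
  shows "BT r x zw zl =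
    marginal q x zw powr \<beta> / (marginal q x zw powr \<beta> + marginal q x zl powr \<beta>)"
proof -
  fix s0 :: "'y \<times> 'z"
  define C where "C = real (card (UNIV :: 'y set)) * q x s0 * exp (- r x (snd s0) / \<beta>)"
  have C_pos: "0 < C"
    unfolding C_def using q_pos[rule_format, of s0] by (simp add: card_gt_0_iff)
  have q_eq: "q x (y, z) = q x s0 * exp ((r x z - r x (snd s0)) / \<beta>)" for y z
  proof -
    have "q x (y, z) = exp (ln (q x (y, z)))"
      using q_pos by simp
    also have "\<dots> = exp (ln (q x s0) + (r x z - r x (snd s0)) / \<beta>)"
      using log_ratio[rule_format, of "(y, z)" s0] assms(1) by (simp add: field_simps)
    also have "\<dots> = q x s0 * exp ((r x z - r x (snd s0)) / \<beta>)"
      using q_pos[rule_format, of s0] by (simp add: exp_add)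
    finally show ?thesis .
  qed
  have "marginal q x z = C * exp (r x z / \<beta>)" for z
    unfolding marginal_def q_eq C_def by (simp add: diff_divide_distrib exp_diff exp_minus field_simps)
  then have "marginal q x z powr \<beta> = C powr \<beta> * exp (r x z)" for z
    using assms(1) C_pos by (simp add: powr_mult exp_powr_real)
  then show ?thesis
    unfolding BT_def using C_pos by (simp add: distrib_left[symmetric])
qed

theorem theorem1:
  fixes r :: "'x::finite \<Rightarrow> 'z::finite \<Rightarrow> real"
    and \<beta> :: real
    and d :: "'x \<Rightarrow> 'y::finite \<times> 'z \<Rightarrow> 'y \<times> 'z \<Rightarrow> real"
    and p :: "'th \<Rightarrow> 'x \<Rightarrow> 'y \<times> 'z \<Rightarrow> real"
    and \<Theta> :: "'th set"
    and \<theta>s :: 'th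
  assumes beta_pos: "\<beta> > 0"
    and d_pos: "\<forall>x s s'. d x s s' > 0"
    and d_sum: "(\<Sum>x\<in>UNIV. \<Sum>s\<in>UNIV. \<Sum>s'\<in>UNIV. d x s s') = 1"
    and family_dist: "\<forall>\<theta>\<in>\<Theta>. cond_dist (p \<theta>)"
    and family_rich: "\<forall>q. cond_dist q \<and> (\<forall>x s. q x s > 0) \<longrightarrow> (\<exists>\<theta>\<in>\<Theta>. p \<theta> = q)"
    and opt_mem: "\<theta>s \<in> \<Theta>"
    and opt_min: "\<forall>\<theta>\<in>\<Theta>. L_direct \<beta> r d (p \<theta>s) \<le> L_direct \<beta> r d (p \<theta>)"
  shows "\<forall>x zw zl. BT r x zw zl =
           marginal (p \<theta>s) x zw powr \<beta> /
             (marginal (p \<theta>s) x zw powr \<beta> + marginal (p \<theta>s) x zl powr \<beta>)"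
proof (intro allI)
  fix x zw zl
  have beta_ne: "\<beta> \<noteq> 0"
    using beta_pos by simp
  have "\<exists>\<theta>\<in>\<Theta>. p \<theta> = gibbs_model \<beta> r"
    by (rule family_rich[rule_format]) (simp add: cond_dist_gibbs_model gibbs_model_pos)
  then obtain \<theta>g where "\<theta>g \<in> \<Theta>" and gibbs: "p \<theta>g = gibbs_model \<beta> r" ..
  have "L_direct \<beta> r d (p \<theta>s) \<le> L_direct \<beta> r d (p \<theta>g)"
    using opt_min \<open>\<theta>g \<in> \<Theta>\<close> by (rule bspec)
  then have le: "L_direct \<beta> r d (p \<theta>s) \<le> ereal (oracle_entropy r d)"
    unfolding gibbs L_direct_gibbs_model[OF beta_ne] .
  have q_pos: "\<forall>x s. 0 < p \<theta>s x s"
    using le by (rule pos_model_if_L_direct_finite)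
  have "\<forall>s s'. \<beta> * (ln (p \<theta>s x s) - ln (p \<theta>s x s')) = r x (snd s) - r x (snd s')"
    using log_ratio_eq_if_L_direct_le[OF d_pos q_pos le] by blast
  with beta_ne q_pos show "BT r x zw zl = marginal (p \<theta>s) x zw powr \<beta> /
      (marginal (p \<theta>s) x zw powr \<beta> + marginal (p \<theta>s) x zl powr \<beta>)"
    by (intro BT_eq_marginal_powr_if_log_ratio) auto
qed

end
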